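(* Let $k=12a+b+\frac12$ with $a\in\mathbb Z$ and $b\in\{6,8,9,10,11,12,13,14,15,16,17,19\}$, and let $m$ be an integer such that either $m\equiv0\pmod4$, or $m\equiv1\pmod4$ and $k+\frac12$ is even, or $m\equiv3\pmod4$ and $k+\frac12$ is odd. If $m\ge4.8|a|$, then: (i) if $\theta\in(\frac\pi3,\frac{5\pi}{12}]$, then $|\mathcal C_{m,k}(\theta)|<\sqrt2$; (ii) if $\theta\in[\frac{7\pi}{12},\frac{2\pi}3)$, then $|\mathcal D_{m,k}(\theta)|<\sqrt2$.
   Context: Define $c_{m,k}=1+i$ if $m\equiv0\ (4)$ and $k+\frac12$ odd; $c_{m,k}=1-i$ if $m\equiv0\ (4)$ and $k+\frac12$ even; $c_{m,k}=0$ if $m\equiv1\ (4)$ and $k+\frac12$ even, or $m\equiv3\ (4)$ and $k+\frac12$ odd. Define $d_{m,k}=1-i$ if $m\equiv1\ (4)$ and $k+\frac12$ even; $d_{m,k}=1+i$ if $m\equiv3\ (4)$ and $k+\frac12$ odd; $d_{m,k}=0$ if $m\equiv0\ (4)$. Set $\mathcal C_{m,k}(\theta)=-c_{m,k}(2i)^{-k}(\sin\frac\theta2)^{-k}e^{-\frac{\pi im}4}e^{\frac{\pi m}2\left(\frac1{2\tan(\theta/2)}-\sin\theta\right)}$ and $\mathcal D_{m,k}(\theta)=-d_{m,k}2^{-k}(\cos\frac\theta2)^{-k}e^{\frac{\pi im}4}e^{\frac{\pi m}2\left(\frac{\tan(\theta/2)}2-\sin\theta\right)}$, with principal branches of complex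 powers. *)

theory Defs
  imports "HOL-Analysis.Analysis"
begin

definition half_odd :: "real \<Rightarrow> bool" where
  "half_odd k \<longleftrightarrow> (\<exists>j::int. k + 1/2 = of_int j \<and> odd j)"

definition half_even :: "real \<Rightarrow> bool" where
  "half_even k \<longleftrightarrow> (\<exists>j::int. k + 1/2 = of_int j \<and> even j)"

text \<open>Coefficients c and d; outside the cases specified in the paper they are set to 0
  (those cases never occur under the hypotheses of the theorem).\<close>

definition c_coef :: "int \<Rightarrow> real \<Rightarrow> complex" where
  "c_coef m k =
     (if m mod 4 = 0 \<and> half_odd k then 1 + \<i>
      else if m mod 4 = 0 \<and> half_even k then 1 - \<i>
      else 0)"

definition d_coef :: "int \<Rightarrow> real \<Rightarrow> complex" where
  "d_coef m k =
     (if m mod 4 = 1 \<and> half_even k then 1 - \<i>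
      else if m mod 4 = 3 \<and> half_odd k then 1 + \<i>
      else 0)"

definition calC :: "int \<Rightarrow> real \<Rightarrow> real \<Rightarrow> complex" where
  "calC m k \<theta> =
     - c_coef m k * (2 * \<i>) powr (- complex_of_real k)
       * (complex_of_real (sin (\<theta>/2))) powr (- complex_of_real k)
       * exp (- complex_of_real (pi * of_int m / 4) * \<i>)
       * complex_of_real (exp (pi * of_int m / 2 * (1 / (2 * tan (\<theta>/2)) - sin \<theta>)))"

definition calD :: "int \<Rightarrow> real \<Rightarrow> real \<Rightarrow> complex" where
  "calD m k \<theta> =
     - d_coef m k * (2::complex) powr (- complex_of_real k)
       * (complex_of_real (cos (\<theta>/2))) powr (- complex_of_real k)
       * exp (complex_of_real (pi * of_int m / 4) * \<i>)
       * complex_of_real (exp (pi * of_int m / 2 * (tan (\<theta>/2) / 2 - sin \<theta>)))"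

end

theory Submission
  imports Defs
begin

text \<open>Write \<open>u = 2 sin(\<theta>/2)\<close> and \<open>c = cos(\<theta>/2)\<close> (the case of \<open>D_{m,k}\<close> is the same after
  \<open>\<theta> \<mapsto> \<pi> - \<theta>\<close>). The phase factors have modulus one and the coefficient modulus at most \<open>\<surd>2\<close>, hence it suffices that the exponent
  \<open>-k ln u - (\<pi> m/2) c (u - 1/u)\<close> is negative. On the given range \<open>1 < u \<le> 1.2176\<close>, and there
  \<open>5 ln u \<le> \<pi> c (u - 1/u)\<close>; with \<open>m \<ge> 4.8|a|\<close> this bounds the exponent by
  \<open>-(k + 12|a|) ln u \<le> -(b + 1/2) ln u < 0\<close>.\<close>

lemma ln_le_half_diff_inverse:
  fixes w :: real
  assumes "1 \<le> w"
  shows "ln w \<le> (w - 1/w) / 2"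
proof -
  let ?f = "\<lambda>x::real. (x - 1/x) / 2 - ln x"
  have "?f 1 \<le> ?f w"
  proof (rule DERIV_nonneg_imp_increasing_open[OF assms])
    fix x :: real
    assume x: "1 < x" "x < w"
    have "DERIV ?f x :> (1 + 1/x^2) / 2 - 1/x"
      using x by (auto intro!: derivative_eq_intros simp: power2_eq_square field_simps)
    moreover have "(1 + 1/x^2) / 2 - 1/x = (1 - 1/x)^2 / 2"
      using x by (simp add: power2_eq_square field_simps)
    ultimately show "\<exists>y. DERIV ?f x :> y \<and> y \<ge> 0" by auto
  qed (intro continuous_intros; auto)
  then show ?thesis by simp
qed

lemma ln_le_sqrt_diff_inverse:
  fixes u :: real
  assumes "1 \<le> u"
  shows "ln u \<le> sqrt u - 1 / sqrt u"
proof -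
  have "ln u = 2 * ln (sqrt u)"
    using assms by (simp add: ln_sqrt)
  also have "\<dots> \<le> sqrt u - 1 / sqrt u"
    using ln_le_half_diff_inverse[of "sqrt u"] assms by simp
  finally show ?thesis .
qed

lemma pi_squared_bounds: "9.8696 \<le> pi\<^sup>2" "pi\<^sup>2 \<le> 10"
proof -
  have "(3.141592653588::real)\<^sup>2 \<le> pi\<^sup>2" "pi\<^sup>2 \<le> (3.1415926535899::real)\<^sup>2"
    using pi_approx by (intro power_mono; simp)+
  then show "9.8696 \<le> pi\<^sup>2" "pi\<^sup>2 \<le> 10"
    by (simp_all add: power2_eq_square)
qed

lemma quartic_lower_bound:
  fixes u c :: real
  assumes "1 \<le> u" "u\<^sup>2 \<le> 1.48256" "9.8696 \<le> c" "c \<le> 10"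
  shows "100 * u < c * ((4 - u\<^sup>2) * (u + 1)\<^sup>2)"
proof -
  define t where "t = u - 1"
  have t0: "0 \<le> t" using assms(1) by (simp add: t_def)
  have "u \<le> 1.2177"
  proof (rule ccontr)
    assume "\<not> u \<le> 1.2177"
    then have "1.2177 * 1.2177 < u * u" by (intro mult_strict_mono) auto
    with assms(2) show False by (simp add: power2_eq_square)
  qed
  then have tT: "t \<le> 0.2177" by (simp add: t_def)
  have "t^2 \<le> 0.2177^2" "t^3 \<le> 0.2177^3" "t^4 \<le> 0.2177^4"
    using t0 tT by (intro power_mono; simp)+
  then have quartic: "11.5093 + 4*t \<le> (4 - u\<^sup>2) * (u + 1)\<^sup>2"
    unfolding t_def
    by (simp add: algebra_simps power2_eq_square power3_eq_cube power4_eq_xxxx)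
  have "(4*c - 100) * 0.2177 \<le> (4*c - 100) * t"
    using assms(4) tT by (intro mult_left_mono_neg) auto
  then have "0.8708 * c - 21.77 \<le> 4 * (c * t) - 100 * t"
    by (simp add: left_diff_distrib right_diff_distrib)
  then have "100 * u < c * (11.5093 + 4*t)"
    using assms(3) by (simp add: t_def algebra_simps)
  also have "\<dots> \<le> c * ((4 - u\<^sup>2) * (u + 1)\<^sup>2)"
    using quartic assms(3) by (intro mult_left_mono) auto
  finally show ?thesis .
qed

lemma five_ln_le:
  fixes u c :: real
  assumes u1: "1 < u" and uU: "u\<^sup>2 \<le> 1.48256" and c0: "0 \<le> c" and c2: "c\<^sup>2 = 1 - u\<^sup>2 / 4"
  shows "5 * ln u \<le> pi * c * (u - 1/u)"
proof -
  define v where "v = sqrt u"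
  have v1: "1 \<le> v" and vu: "v\<^sup>2 = u"
    using u1 by (simp_all add: v_def)
  have "(v + 1/v)\<^sup>2 = (u + 1)\<^sup>2 / u"
    using vu v1 by (simp add: power2_eq_square field_simps)
  then have "(pi * c * (v + 1/v))\<^sup>2 = pi\<^sup>2 * (1 - u\<^sup>2 / 4) * ((u + 1)\<^sup>2 / u)"
    using c2 by (simp add: power_mult_distrib)
  also have "\<dots> = pi\<^sup>2 * ((4 - u\<^sup>2) * (u + 1)\<^sup>2) / (4 * u)"
    using u1 by (simp add: field_simps)
  also have "25 < \<dots>"
    using quartic_lower_bound[OF _ uU pi_squared_bounds] u1 by (simp add: field_simps)
  finally have "5\<^sup>2 < (pi * c * (v + 1/v))\<^sup>2" by simp
  then have G5: "5 < pi * c * (v + 1/v)"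
    by (rule power2_less_imp_less) (use c0 v1 in simp)
  have "0 \<le> v - 1/v"
    using v1 mult_mono[OF v1 v1] by (simp add: field_simps)
  have "5 * ln u \<le> 5 * (v - 1/v)"
    using ln_le_sqrt_diff_inverse[of u] u1 by (simp add: v_def)
  also have "\<dots> \<le> pi * c * (v + 1/v) * (v - 1/v)"
    using G5 \<open>0 \<le> v - 1/v\<close> by (intro mult_right_mono) auto
  also have "\<dots> = pi * c * (u - 1/u)"
    using vu v1 u1 by (simp add: power2_eq_square field_simps)
  finally show ?thesis .
qed

text \<open>Here \<open>L\<close> plays \<open>ln u\<close> and \<open>D\<close> plays \<open>c (u - 1/u)\<close>; the constant \<open>4.8 = 2 \<cdot> 12 / 5\<close> exactly
  converts \<open>5 L \<le> \<pi> D\<close> into a loss of \<open>12 |a| L\<close>.\<close>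

lemma exponent_negative:
  fixes a K L M D :: real
  assumes L0: "0 < L" and LD: "5 * L \<le> pi * D" and M: "4.8 * \<bar>a\<bar> \<le> M" and K: "0 < K + 12 * \<bar>a\<bar>"
  shows "- K * L - pi * M / 2 * D < 0"
proof -
  have "0 \<le> D"
    using L0 LD pi_gt_zero by (smt (verit) mult_le_0_iff)
  then have "4.8 * \<bar>a\<bar> * (pi * D) \<le> M * (pi * D)"
    using M by (intro mult_right_mono) auto
  moreover have "\<bar>a\<bar> * (5 * L) \<le> \<bar>a\<bar> * (pi * D)"
    using LD by (intro mult_left_mono) auto
  moreover have "0 < (K + 12 * \<bar>a\<bar>) * L"
    using K L0 by simp
  ultimately show ?thesis
    by (simp add: algebra_simps)
qed

lemma half_angle_sin_bounds:
  fixes \<theta> :: real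
  assumes "\<theta> \<in> {pi/3 <.. 5*pi/12}"
  shows "0 < sin (\<theta>/2)" "0 < cos (\<theta>/2)" "1 < 2 * sin (\<theta>/2)" "(2 * sin (\<theta>/2))\<^sup>2 \<le> 1.48256"
proof -
  have t1: "pi/3 < \<theta>" and t2: "\<theta> \<le> 5*pi/12"
    using assms by auto
  show s0: "0 < sin (\<theta>/2)" and "0 < cos (\<theta>/2)"
    using t1 t2 by (intro sin_gt_zero cos_gt_zero; simp)+
  have sq: "(2 * sin (\<theta>/2))\<^sup>2 = 2 - 2 * cos \<theta>"
    using cos_double_sin[of "\<theta>/2"] by (simp add: power_mult_distrib)
  have "cos \<theta> < cos (pi/3)"
    using t1 t2 by (intro cos_monotone_0_pi) auto
  then have "1\<^sup>2 < (2 * sin (\<theta>/2))\<^sup>2"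
    using sq cos_60 by simp
  then show "1 < 2 * sin (\<theta>/2)"
    by (rule power2_less_imp_less) (use s0 in simp)
  have cos_5pi12: "cos (5*pi/12) = (sqrt 2 * sqrt 3 - sqrt 2) / 4"
    using cos_add[of "pi/4" "pi/6"] by (simp add: cos_45 cos_30 sin_45 sin_30 add_divide_distrib)
  have "1.7320 \<le> sqrt 3"
    by (rule real_le_rsqrt) (simp add: power2_eq_square)
  moreover have "1.4142 \<le> sqrt 2"
    by (rule real_le_rsqrt) (simp add: power2_eq_square)
  ultimately have "1.4142 * 0.7320 \<le> sqrt 2 * (sqrt 3 - 1)"
    by (intro mult_mono) auto
  then have "2 - 2 * cos (5*pi/12) \<le> 1.48256"
    unfolding cos_5pi12 by (simp add: algebra_simps)
  moreover have "cos (5*pi/12) \<le> cos \<theta>"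
    using t1 t2 by (intro cos_monotone_0_pi_le) auto
  ultimately show "(2 * sin (\<theta>/2))\<^sup>2 \<le> 1.48256"
    using sq by simp
qed


lemma norm_c_coef_le: "cmod (c_coef m k) \<le> sqrt 2"
  unfolding c_coef_def by (auto simp: cmod_def)

lemma norm_d_coef_le: "cmod (d_coef m k) \<le> sqrt 2"
  unfolding d_coef_def by (auto simp: cmod_def)

lemma norm_calC:
  fixes \<theta> k :: real and m :: int
  defines "s \<equiv> sin (\<theta>/2)" and "c \<equiv> cos (\<theta>/2)"
  assumes s0: "0 < s"
  shows "cmod (calC m k \<theta>) =
    cmod (c_coef m k) * exp (- k * ln (2 * s) - pi * of_int m / 2 * (c * (2 * s - 1 / (2 * s))))"
proof -
  have "cmod ((2 * \<i>) powr (- complex_of_real k)) * cmod (complex_of_real s powr (- complex_of_real k))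
      = (2 * s) powr (- k)"
    using s0 by (simp add: norm_powr_complex norm_mult norm_powr_real_powr powr_mult)
  also have "\<dots> = exp (- k * ln (2 * s))"
    using s0 by (simp add: powr_def)
  finally have powers: "cmod ((2 * \<i>) powr (- complex_of_real k)) *
      cmod (complex_of_real s powr (- complex_of_real k)) = exp (- k * ln (2 * s))" .
  have "1 / (2 * tan (\<theta>/2)) - sin \<theta> = - (c * (2 * s - 1 / (2 * s)))"
    using s0 sin_double[of "\<theta>/2"] by (simp add: s_def c_def tan_def field_simps)
  then have "cmod (calC m k \<theta>) = cmod (c_coef m k) *
      (cmod ((2 * \<i>) powr (- complex_of_real k)) * cmod (complex_of_real s powr (- complex_of_real k))) *
      exp (- (pi * of_int m / 2 * (c * (2 * s - 1 / (2 * s)))))"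
    unfolding calC_def norm_mult norm_minus_cancel by (simp flip: s_def)
  then show ?thesis
    unfolding powers by (simp add: mult.assoc flip: exp_add)
qed

lemma norm_calD:
  fixes \<theta> k :: real and m :: int
  defines "s \<equiv> sin (\<theta>/2)" and "c \<equiv> cos (\<theta>/2)"
  assumes c0: "0 < c"
  shows "cmod (calD m k \<theta>) =
    cmod (d_coef m k) * exp (- k * ln (2 * c) - pi * of_int m / 2 * (s * (2 * c - 1 / (2 * c))))"
proof -
  have "cmod ((2::complex) powr (- complex_of_real k)) * cmod (complex_of_real c powr (- complex_of_real k))
      = (2 * c) powr (- k)"
    using c0 by (simp add: norm_powr_real_powr powr_mult)
  also have "\<dots> = exp (- k * ln (2 * c))"
    using c0 by (simp add: powr_def)
  finally have powers: "cmod ((2::complex) powr (- complex_of_real k)) *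
      cmod (complex_of_real c powr (- complex_of_real k)) = exp (- k * ln (2 * c))" .
  have "tan (\<theta>/2) / 2 - sin \<theta> = - (s * (2 * c - 1 / (2 * c)))"
    using c0 sin_double[of "\<theta>/2"] by (simp add: s_def c_def tan_def field_simps)
  then have "cmod (calD m k \<theta>) = cmod (d_coef m k) *
      (cmod ((2::complex) powr (- complex_of_real k)) * cmod (complex_of_real c powr (- complex_of_real k))) *
      exp (- (pi * of_int m / 2 * (s * (2 * c - 1 / (2 * c)))))"
    unfolding calD_def norm_mult norm_minus_cancel by (simp flip: c_def)
  then show ?thesis
    unfolding powers by (simp add: mult.assoc flip: exp_add)
qed

lemma half_angle_exponent_negative:
  fixes \<theta> a K M :: real
  defines "s \<equiv> sin (\<theta>/2)" and "c \<equiv> cos (\<theta>/2)"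
  assumes "\<theta> \<in> {pi/3 <.. 5*pi/12}" and "4.8 * \<bar>a\<bar> \<le> M" and "0 < K + 12 * \<bar>a\<bar>"
  shows "- K * ln (2 * s) - pi * M / 2 * (c * (2 * s - 1 / (2 * s))) < 0"
proof (rule exponent_negative[OF _ _ assms(4,5)])
  note bounds = half_angle_sin_bounds[OF assms(3), folded s_def c_def]
  show "0 < ln (2 * s)"
    using bounds by simp
  have "c\<^sup>2 = 1 - (2 * s)\<^sup>2 / 4"
    by (simp add: s_def c_def power_mult_distrib cos_squared_eq)
  then show "5 * ln (2 * s) \<le> pi * (c * (2 * s - 1 / (2 * s)))"
    using five_ln_le[OF bounds(3,4)] bounds(2) by (simp add: mult.assoc)
qed

lemma norm_times_exp_less_sqrt2:
  fixes z :: complex and E :: real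
  assumes "cmod z \<le> sqrt 2" and "E < 0"
  shows "cmod z * exp E < sqrt 2"
proof -
  have "cmod z * exp E \<le> sqrt 2 * exp E"
    using assms(1) by (intro mult_right_mono) auto
  also have "\<dots> < sqrt 2"
    using assms(2) by simp
  finally show ?thesis .
qed

theorem lemma6p1:
  fixes a m :: int and b :: int and k \<theta> :: real
  assumes hk: "k = 12 * of_int a + of_int b + 1/2"
    and hb: "b \<in> {6,8,9,10,11,12,13,14,15,16,17,19}"
    and hm: "m mod 4 = 0 \<or> (m mod 4 = 1 \<and> half_even k) \<or> (m mod 4 = 3 \<and> half_odd k)"
    and hma: "real_of_int m \<ge> 4.8 * \<bar>real_of_int a\<bar>"
  shows "(\<theta> \<in> {pi/3 <.. 5*pi/12} \<longrightarrow> cmod (calC m k \<theta>) < sqrt 2) \<and>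
         (\<theta> \<in> {7*pi/12 ..< 2*pi/3} \<longrightarrow> cmod (calD m k \<theta>) < sqrt 2)"
proof (intro conjI impI)
  have k_pos: "0 < k + 12 * \<bar>real_of_int a\<bar>"
    using hk hb by auto
  note exponent_negative = half_angle_exponent_negative[OF _ hma k_pos]
  show "cmod (calC m k \<theta>) < sqrt 2" if "\<theta> \<in> {pi/3 <.. 5*pi/12}"
    unfolding norm_calC[OF half_angle_sin_bounds(1)[OF that]]
    using norm_c_coef_le exponent_negative[OF that] by (rule norm_times_exp_less_sqrt2)
  show "cmod (calD m k \<theta>) < sqrt 2" if "\<theta> \<in> {7*pi/12 ..< 2*pi/3}"
  proof -
    have reflected: "pi - \<theta> \<in> {pi/3 <.. 5*pi/12}"
      using that by auto
    have "sin ((pi - \<theta>)/2) = cos (\<theta>/2)" "cos ((pi - \<theta>)/2) = sin (\<theta>/2)"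
      by (simp_all add: diff_divide_distrib sin_diff cos_diff)
    note bounds = half_angle_sin_bounds[OF reflected, unfolded this]
      and exponent = exponent_negative[OF reflected, unfolded this]
    show ?thesis
      unfolding norm_calD[OF bounds(1)]
      using norm_d_coef_le exponent by (rule norm_times_exp_less_sqrt2)
  qed
qed

end
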